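(* For each $n\in\mathbb{Z}^+$, let $\mathsf{A}^{(n)}$ be a strictly lower-triangular $n\times n$ real matrix with entries $a^{(n)}_{i,j}$ and $\mathbf{v}^{(n)}$ an $n$-dimensional real row vector with entries $v^{(n)}_i$. Assume that $|a^{(n)}_{i,j}|^2\leq np$ for all $i,j,n$, for some real $p>0$, and that \[ \liminf_{n\to\infty}-\frac{1}{2n}\log\big\|\mathbf{v}^{(n)}(\mathsf{I}+\mathsf{A}^{(n)})\big\|^2\geq\Gamma \] for some real $\Gamma>0$. Then for each $\epsilon\in(0,\Gamma)$ and all sufficiently large $n$ the following holds: if $|v^{(n)}_j|>e^{-n(\Gamma-\epsilon)}$ for some index $j\in\{1,\ldots,n\}$, then there exists an index $i\in\{j+1,\ldots,n\}$ with \[ |v^{(n)}_i|\geq\frac{|v^{(n)}_j|-e^{-n(\Gamma-\epsilon)}}{n^{3/2}\sqrt{p}}. \] If moreover $\|\mathbf{v}^{(n)}\|=1$ for all $n$, then the cardinality of the set $\mathcal{S}^{(n)}:=\{j\in\{1,\ldots,n\}:|v^{(n)}_j|>n^{-2\log n}\}$ is unbounded in $n$.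
   Context: $\mathsf{I}$ denotes the identity matrix, $\|\cdot\|$ the Euclidean norm, and $\log$ the natural logarithm. *)

theory Defs
  imports "HOL-Analysis.Analysis"
begin

text \<open>Vectors of dimension n are functions nat => real used on indices 1..n;
  n x n matrices are functions nat => nat => real used on indices 1..n.\<close>

definition vnorm :: "nat \<Rightarrow> (nat \<Rightarrow> real) \<Rightarrow> real" where
  "vnorm n v = sqrt (\<Sum>j=1..n. (v j)^2)"

definition row_times_IpA :: "nat \<Rightarrow> (nat \<Rightarrow> real) \<Rightarrow> (nat \<Rightarrow> nat \<Rightarrow> real) \<Rightarrow> nat \<Rightarrow> real" where
  "row_times_IpA n v a j = v j + (\<Sum>i=1..n. v i * a i j)"

definition neg_log_rate :: "nat \<Rightarrow> real \<Rightarrow> ereal" where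
  "neg_log_rate n s = (if s = 0 then \<infinity> else ereal (- (1 / (2 * real n)) * ln s))"

end

theory Submission
  imports Defs "HOL-Real_Asymp.Real_Asymp"
begin

text \<open>
  Write w = v (I + A). As A is strictly lower triangular, w_j - v_j is a combination of the
  later entries v_i (i > j) with coefficients of size at most sqrt (n p), while the Liminf
  hypothesis makes every w_j smaller than exp (-n (\<Gamma> - \<epsilon>)) for large n. So a
  large v_j must be almost cancelled by the later entries, one of which therefore has size
  at least (|v_j| - exp (-n (\<Gamma> - \<epsilon>))) / (n sqrt (n p)).

  A unit vector has an entry of size at least n^(-1/2). Propagating k times from it gives
  k + 1 distinct indices whose entries are at least n^(-1/2) (2 n^(3/2) sqrt p)^(-k); for
  fixed k this polynomial bound eventually beats both n^(-2 log n) and the exponentially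
  small error, so the number of entries above n^(-2 log n) exceeds every bound.
\<close>

lemma abs_le_vnorm:
  assumes "j \<in> {1..n}"
  shows "\<bar>w j\<bar> \<le> vnorm n w"
proof -
  have "(w j)\<^sup>2 \<le> (\<Sum>i=1..n. (w i)\<^sup>2)"
    using assms by (intro member_le_sum) auto
  then show ?thesis
    unfolding vnorm_def by (simp add: real_le_rsqrt)
qed

lemma neg_log_rate_gt_imp_sqrt_less:
  assumes "0 < n" "0 \<le> s" "ereal c < neg_log_rate n s"
  shows "sqrt s < exp (- real n * c)"
proof (cases "s = 0")
  case False
  with assms have "c < - (1 / (2 * real n)) * ln s"
    by (simp add: neg_log_rate_def)
  with \<open>0 < n\<close> have "ln s < 2 * (- real n * c)"
    by (simp add: field_simps)
  then have "s < exp (2 * (- real n * c))"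
    using assms False by (metis exp_less_mono exp_ln order_le_neq_trans)
  also have "\<dots> = exp (- real n * c) ^ 2"
    by (simp add: exp_double[symmetric])
  finally show ?thesis
    using real_sqrt_less_mono by fastforce
qed simp

lemma eventually_entries_less_exp:
  fixes w :: "nat \<Rightarrow> nat \<Rightarrow> real"
  assumes liminf: "ereal \<Gamma> \<le> Liminf sequentially (\<lambda>n. neg_log_rate n ((vnorm n (w n))\<^sup>2))"
    and "c < \<Gamma>"
  shows "\<forall>\<^sub>F n in sequentially. \<forall>j\<in>{1..n}. \<bar>w n j\<bar> < exp (- real n * c)"
proof -
  have "ereal c < ereal \<Gamma>"
    using \<open>c < \<Gamma>\<close> by simp
  also note liminf
  finally have "\<forall>\<^sub>F n in sequentially. ereal c < neg_log_rate n ((vnorm n (w n))\<^sup>2)"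
    by (rule less_LiminfD)
  then show ?thesis
  proof (rule eventually_mono, intro ballI)
    fix n j
    assume "ereal c < neg_log_rate n ((vnorm n (w n))\<^sup>2)" and j: "j \<in> {1..n}"
    then have "sqrt ((vnorm n (w n))\<^sup>2) < exp (- real n * c)"
      by (intro neg_log_rate_gt_imp_sqrt_less) auto
    then have "vnorm n (w n) < exp (- real n * c)"
      by (simp add: vnorm_def)
    then show "\<bar>w n j\<bar> < exp (- real n * c)"
      using abs_le_vnorm[OF j, of "w n"] by linarith
  qed
qed

definition entries_propagate :: "nat \<Rightarrow> real \<Rightarrow> real \<Rightarrow> (nat \<Rightarrow> real) \<Rightarrow> bool" where
  "entries_propagate n E D v \<longleftrightarrow>
     (\<forall>j\<in>{1..n}. E < \<bar>v j\<bar> \<longrightarrow> (\<exists>i\<in>{j+1..n}. (\<bar>v j\<bar> - E) / D \<le> \<bar>v i\<bar>))"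

lemma strictly_lower_entry_propagates:
  fixes v :: "nat \<Rightarrow> real" and a :: "nat \<Rightarrow> nat \<Rightarrow> real"
  assumes lower: "\<And>i. i \<in> {1..n} \<Longrightarrow> i \<le> j \<Longrightarrow> a i j = 0"
    and bound: "\<And>i. i \<in> {1..n} \<Longrightarrow> \<bar>a i j\<bar> \<le> B"
    and j: "j \<in> {1..n}"
    and small: "\<bar>row_times_IpA n v a j\<bar> < E"
    and large: "E < \<bar>v j\<bar>"
  shows "\<exists>i\<in>{j+1..n}. \<bar>v j\<bar> - E \<le> real n * B * \<bar>v i\<bar>"
proof (rule ccontr)
  assume "\<not> ?thesis"
  then have later_small: "real n * (B * \<bar>v i\<bar>) < \<bar>v j\<bar> - E" if "i \<in> {j+1..n}" for i
    using that by (auto simp: not_le mult.assoc)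
  have "{1..n} = {1..j} \<union> {j+1..n}" "{1..j} \<inter> {j+1..n} = {}"
    using j by auto
  then have "(\<Sum>i=1..n. v i * a i j) = (\<Sum>i=j+1..n. v i * a i j)"
    using lower by (simp add: sum.union_disjoint)
  also have "\<bar>\<dots>\<bar> \<le> (\<Sum>i=j+1..n. B * \<bar>v i\<bar>)"
  proof (intro sum_abs[THEN order_trans] sum_mono)
    fix i assume "i \<in> {j+1..n}"
    then have "\<bar>a i j\<bar> \<le> B"
      using bound j by simp
    then show "\<bar>v i * a i j\<bar> \<le> B * \<bar>v i\<bar>"
      by (metis abs_ge_zero abs_mult mult.commute mult_left_mono)
  qed
  finally have sum_le: "\<bar>\<Sum>i=1..n. v i * a i j\<bar> \<le> (\<Sum>i=j+1..n. B * \<bar>v i\<bar>)" .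
  have "\<bar>v j\<bar> - E < \<bar>\<Sum>i=1..n. v i * a i j\<bar>"
    using small by (simp add: row_times_IpA_def)
  then have "real n * (\<bar>v j\<bar> - E) < real n * (\<Sum>i=j+1..n. B * \<bar>v i\<bar>)"
    using sum_le j by (intro mult_strict_left_mono) auto
  also have "\<dots> \<le> real (card {j+1..n}) * (\<bar>v j\<bar> - E)"
    unfolding sum_distrib_left using later_small
    by (intro sum_bounded_above[THEN order_trans]) (auto intro: less_imp_le)
  also have "\<dots> \<le> real n * (\<bar>v j\<bar> - E)"
    using large by (intro mult_right_mono) auto
  finally show False by simp
qed

lemma mult_sqrt_mult_eq_powr:
  assumes "0 \<le> x"
  shows "x * sqrt (x * p) = x powr (3/2) * sqrt p"
proof -
  have "x powr (3/2) = x powr (1 + 1/2)"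
    by simp
  also have "\<dots> = x powr 1 * x powr (1/2)"
    by (rule powr_add)
  also have "\<dots> = x * sqrt x"
    using assms by (simp add: powr_half_sqrt)
  finally show ?thesis
    by (simp add: real_sqrt_mult)
qed

lemma eventually_large_entry_propagates:
  fixes a :: "nat \<Rightarrow> nat \<Rightarrow> nat \<Rightarrow> real" and v :: "nat \<Rightarrow> nat \<Rightarrow> real"
  assumes lower: "\<And>n i j. 1 \<le> n \<Longrightarrow> i \<in> {1..n} \<Longrightarrow> j \<in> {1..n} \<Longrightarrow> i \<le> j \<Longrightarrow> a n i j = 0"
    and p_pos: "0 < p"
    and bound: "\<And>n i j. 1 \<le> n \<Longrightarrow> i \<in> {1..n} \<Longrightarrow> j \<in> {1..n} \<Longrightarrow> \<bar>a n i j\<bar>\<^sup>2 \<le> real n * p"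
    and liminf: "ereal \<Gamma> \<le> Liminf sequentially (\<lambda>n. neg_log_rate n ((vnorm n (row_times_IpA n (v n) (a n)))\<^sup>2))"
    and "c < \<Gamma>"
  shows "\<forall>\<^sub>F n in sequentially. entries_propagate n (exp (- real n * c)) (real n powr (3/2) * sqrt p) (v n)"
  using eventually_entries_less_exp[OF liminf \<open>c < \<Gamma>\<close>] unfolding entries_propagate_def
proof (rule eventually_mono, intro ballI impI)
  fix n j
  assume small: "\<forall>j\<in>{1..n}. \<bar>row_times_IpA n (v n) (a n) j\<bar> < exp (- real n * c)"
    and j: "j \<in> {1..n}" and large: "exp (- real n * c) < \<bar>v n j\<bar>"
  have n: "1 \<le> n" using j by simp
  obtain i where i: "i \<in> {j+1..n}"
    and "\<bar>v n j\<bar> - exp (- real n * c) \<le> real n * sqrt (real n * p) * \<bar>v n i\<bar>"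
    using strictly_lower_entry_propagates[OF lower[OF n _ j] _ j small[rule_format, OF j] large,
        of "sqrt (real n * p)"] bound[OF n _ j] by (auto simp: real_le_rsqrt)
  moreover have "real n * sqrt (real n * p) = real n powr (3/2) * sqrt p"
    by (simp add: mult_sqrt_mult_eq_powr)
  ultimately have "(\<bar>v n j\<bar> - exp (- real n * c)) / (real n powr (3/2) * sqrt p) \<le> \<bar>v n i\<bar>"
    using n p_pos by (simp add: divide_le_eq mult.commute)
  with i show "\<exists>i\<in>{j+1..n}. (\<bar>v n j\<bar> - exp (- real n * c)) / (real n powr (3/2) * sqrt p) \<le> \<bar>v n i\<bar>"
    by blast
qed

lemma exists_entry_ge_inverse_sqrt:
  assumes "1 \<le> n" and unit: "vnorm n v = 1"
  shows "\<exists>j\<in>{1..n}. 1 / sqrt (real n) \<le> \<bar>v j\<bar>"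
proof (rule ccontr)
  assume "\<not> ?thesis"
  then have "(v j)\<^sup>2 < 1 / real n" if "j \<in> {1..n}" for j
    using that power_strict_mono[of "\<bar>v j\<bar>" "1 / sqrt (real n)" 2]
    by (auto simp: not_le power_divide)
  then have "(\<Sum>j=1..n. (v j)\<^sup>2) < (\<Sum>j=1..n. 1 / real n)"
    using \<open>1 \<le> n\<close> by (intro sum_strict_mono) auto
  also have "\<dots> = 1"
    using \<open>1 \<le> n\<close> by simp
  finally show False
    using unit by (simp add: vnorm_def)
qed

lemma card_entries_gt_ge_of_propagation:
  fixes v :: "nat \<Rightarrow> real"
  assumes D: "0 < D"
    and propagate: "entries_propagate n E D v"
    and j\<^sub>0: "j\<^sub>0 \<in> {1..n}" "\<mu> \<le> \<bar>v j\<^sub>0\<bar>"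
    and above_thr: "\<And>k. k \<le> K \<Longrightarrow> thr < \<mu> / (2 * D) ^ k"
    and above_err: "\<And>k. k \<le> K \<Longrightarrow> 2 * E < \<mu> / (2 * D) ^ k"
  shows "K + 1 \<le> card {j\<in>{1..n}. thr < \<bar>v j\<bar>}"
proof -
  define S where "S = {j\<in>{1..n}. thr < \<bar>v j\<bar>}"
  have chain: "\<exists>j\<in>{1..n}. \<mu> / (2 * D) ^ k \<le> \<bar>v j\<bar> \<and> k + 1 \<le> card {i\<in>S. i \<le> j}"
    if "k \<le> K" for k
    using that
  proof (induction k)
    case 0
    then have "j\<^sub>0 \<in> {i\<in>S. i \<le> j\<^sub>0}"
      using j\<^sub>0 above_thr[of 0] by (auto simp: S_def)
    then have "1 \<le> card {i\<in>S. i \<le> j\<^sub>0}"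
      by (auto simp: Suc_le_eq card_gt_0_iff S_def)
    with j\<^sub>0 show ?case
      by auto
  next
    case (Suc k)
    then obtain j where j: "j \<in> {1..n}" "\<mu> / (2 * D) ^ k \<le> \<bar>v j\<bar>" "k + 1 \<le> card {i\<in>S. i \<le> j}"
      by auto
    have err: "2 * E < \<mu> / (2 * D) ^ k"
      using above_err Suc.prems by simp
    then have "E < \<bar>v j\<bar>"
      using j(2) abs_ge_zero[of "v j"] by linarith
    then obtain i where i: "i \<in> {j+1..n}" "(\<bar>v j\<bar> - E) / D \<le> \<bar>v i\<bar>"
      using propagate j(1) unfolding entries_propagate_def by blast
    have "\<mu> / (2 * D) ^ Suc k = (\<mu> / (2 * D) ^ k / 2) / D"
      by simp
    also have "\<dots> \<le> (\<bar>v j\<bar> - E) / D"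
      using D j(2) err by (intro divide_right_mono) auto
    finally have ge: "\<mu> / (2 * D) ^ Suc k \<le> \<bar>v i\<bar>"
      using i(2) by linarith
    have "insert i {i'\<in>S. i' \<le> j} \<subseteq> {i'\<in>S. i' \<le> i}"
      using i j ge above_thr[OF Suc.prems] by (auto simp: S_def)
    then have "card (insert i {i'\<in>S. i' \<le> j}) \<le> card {i'\<in>S. i' \<le> i}"
      by (intro card_mono) (auto simp: S_def)
    with i j(3) have "Suc k + 1 \<le> card {i'\<in>S. i' \<le> i}"
      by (simp add: S_def)
    with i j ge show ?case
      by auto
  qed
  obtain j where "K + 1 \<le> card {i\<in>S. i \<le> j}"
    using chain by blast
  also have "\<dots> \<le> card S"
    by (intro card_mono) (auto simp: S_def)
  finally show ?thesis
    by (simp add: S_def)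
qed

lemma eventually_less_powr_div:
  assumes "((\<lambda>n. f n / real n powr \<alpha>) \<longlongrightarrow> 0) sequentially" and "0 < D"
  shows "\<forall>\<^sub>F n in sequentially. f n < real n powr \<alpha> / D"
proof -
  have "\<forall>\<^sub>F n in sequentially. f n / real n powr \<alpha> < 1 / D"
    using assms by (intro order_tendstoD(2)) auto
  then show ?thesis
    using eventually_gt_at_top[of 0]
    by eventually_elim (use \<open>0 < D\<close> in \<open>simp add: field_simps\<close>)
qed

lemma inverse_sqrt_div_power_eq_powr:
  assumes "0 < x"
  shows "(1 / sqrt x) / (2 * (x powr (3/2) * sqrt p)) ^ k = x powr (- 1/2 - 3/2 * real k) / (2 * sqrt p) ^ k"
proof -
  have "x powr (- 1/2 - 3/2 * real k) = x powr (- (1/2)) / (x powr (3/2)) ^ k"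
    using assms by (simp add: powr_diff powr_power mult.commute)
  also have "x powr (- (1/2)) = 1 / sqrt x"
    using assms by (simp add: powr_minus_divide powr_half_sqrt)
  finally show ?thesis
    by (simp add: power_mult_distrib field_simps)
qed

lemma card_large_entries_unbounded:
  fixes v :: "nat \<Rightarrow> nat \<Rightarrow> real"
  assumes p_pos: "0 < p" and c_pos: "0 < c"
    and unit: "\<forall>n\<ge>1. vnorm n (v n) = 1"
    and propagate: "\<forall>\<^sub>F n in sequentially. entries_propagate n (exp (- real n * c)) (real n powr (3/2) * sqrt p) (v n)"
  shows "\<not> bdd_above (range (\<lambda>n. card {j\<in>{1..n}. real n powr (- 2 * ln (real n)) < \<bar>v n j\<bar>}))"
proof
  assume "bdd_above (range (\<lambda>n. card {j\<in>{1..n}. real n powr (- 2 * ln (real n)) < \<bar>v n j\<bar>}))"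
  then obtain K where K: "\<And>n. card {j\<in>{1..n}. real n powr (- 2 * ln (real n)) < \<bar>v n j\<bar>} \<le> K"
    by (auto simp: bdd_above_def)
  define L where "L k n = real n powr (- 1/2 - 3/2 * real k) / (2 * sqrt p) ^ k" for k n
  have "\<forall>\<^sub>F n in sequentially. real n powr (- 2 * ln (real n)) < L k n" for k
  proof -
    have "(\<lambda>n. real n powr (- 2 * ln (real n)) / real n powr (- 1/2 - 3/2 * real k)) \<longlonglongrightarrow> 0"
      by real_asymp
    then show ?thesis
      unfolding L_def using p_pos by (intro eventually_less_powr_div) simp_all
  qed
  moreover have "\<forall>\<^sub>F n in sequentially. 2 * exp (- real n * c) < L k n" for k
  proof -
    have "(\<lambda>n. 2 * exp (- real n * c) / real n powr (- 1/2 - 3/2 * real k)) \<longlonglongrightarrow> 0"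
      using c_pos by real_asymp
    then show ?thesis
      unfolding L_def using p_pos by (intro eventually_less_powr_div) simp_all
  qed
  ultimately have "\<forall>\<^sub>F n in sequentially.
      \<forall>k\<in>{..K}. real n powr (- 2 * ln (real n)) < L k n \<and> 2 * exp (- real n * c) < L k n"
    by (intro eventually_ball_finite ballI eventually_conj) simp_all
  then obtain n where n: "1 \<le> n"
    and thr_err: "\<forall>k\<in>{..K}. real n powr (- 2 * ln (real n)) < L k n \<and> 2 * exp (- real n * c) < L k n"
    and prop_n: "entries_propagate n (exp (- real n * c)) (real n powr (3/2) * sqrt p) (v n)"
    using eventually_happens'[OF sequentially_bot,
        OF eventually_conj[OF _ eventually_conj[OF propagate eventually_ge_at_top]]]
    by blast
  obtain j\<^sub>0 where "j\<^sub>0 \<in> {1..n}" "1 / sqrt (real n) \<le> \<bar>v n j\<^sub>0\<bar>"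
    using exists_entry_ge_inverse_sqrt[OF n] unit n by blast
  moreover have "(1 / sqrt (real n)) / (2 * (real n powr (3/2) * sqrt p)) ^ k = L k n" for k
    unfolding L_def using n by (intro inverse_sqrt_div_power_eq_powr) simp
  ultimately have "K + 1 \<le> card {j\<in>{1..n}. real n powr (- 2 * ln (real n)) < \<bar>v n j\<bar>}"
    using card_entries_gt_ge_of_propagation[where D = "real n powr (3/2) * sqrt p" and v = "v n"
        and E = "exp (- real n * c)" and \<mu> = "1 / sqrt (real n)"] prop_n thr_err n p_pos
    by simp
  with K[of n] show False
    by simp
qed

theorem lemma3:
  fixes a :: "nat \<Rightarrow> nat \<Rightarrow> nat \<Rightarrow> real"
    and v :: "nat \<Rightarrow> nat \<Rightarrow> real"
    and p \<Gamma> :: real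
  assumes lower: "\<And>n i j. 1 \<le> n \<Longrightarrow> i \<in> {1..n} \<Longrightarrow> j \<in> {1..n} \<Longrightarrow> i \<le> j \<Longrightarrow> a n i j = 0"
    and p_pos: "p > 0"
    and bound: "\<And>n i j. 1 \<le> n \<Longrightarrow> i \<in> {1..n} \<Longrightarrow> j \<in> {1..n} \<Longrightarrow> \<bar>a n i j\<bar>^2 \<le> real n * p"
    and Gamma_pos: "\<Gamma> > 0"
    and liminf: "Liminf sequentially (\<lambda>n. neg_log_rate n ((vnorm n (row_times_IpA n (v n) (a n)))^2)) \<ge> ereal \<Gamma>"
  shows "(\<forall>\<epsilon>. 0 < \<epsilon> \<and> \<epsilon> < \<Gamma> \<longrightarrow>
            (\<forall>\<^sub>F n in sequentially. \<forall>j\<in>{1..n}.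
               \<bar>v n j\<bar> > exp (- real n * (\<Gamma> - \<epsilon>)) \<longrightarrow>
               (\<exists>i\<in>{j+1..n}. \<bar>v n i\<bar> \<ge> (\<bar>v n j\<bar> - exp (- real n * (\<Gamma> - \<epsilon>))) / (real n powr (3/2) * sqrt p))))
         \<and> ((\<forall>n\<ge>1. vnorm n (v n) = 1) \<longrightarrow>
            \<not> bdd_above (range (\<lambda>n. card {j\<in>{1..n}. \<bar>v n j\<bar> > real n powr (- 2 * ln (real n))})))"
proof (intro conjI allI impI)
  fix \<epsilon> :: real
  assume "0 < \<epsilon> \<and> \<epsilon> < \<Gamma>"
  then have "\<Gamma> - \<epsilon> < \<Gamma>"
    by simp
  then show "\<forall>\<^sub>F n in sequentially. \<forall>j\<in>{1..n}.
               \<bar>v n j\<bar> > exp (- real n * (\<Gamma> - \<epsilon>)) \<longrightarrow>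
               (\<exists>i\<in>{j+1..n}. \<bar>v n i\<bar> \<ge> (\<bar>v n j\<bar> - exp (- real n * (\<Gamma> - \<epsilon>))) / (real n powr (3/2) * sqrt p))"
    using eventually_large_entry_propagates[OF lower p_pos bound liminf, of "\<Gamma> - \<epsilon>"]
    by (simp add: entries_propagate_def)
next
  assume "\<forall>n\<ge>1. vnorm n (v n) = 1"
  moreover have "0 < \<Gamma> / 2" and "\<Gamma> / 2 < \<Gamma>"
    using Gamma_pos by simp_all
  ultimately show "\<not> bdd_above (range (\<lambda>n. card {j\<in>{1..n}. \<bar>v n j\<bar> > real n powr (- 2 * ln (real n))}))"
    using card_large_entries_unbounded[OF p_pos] eventually_large_entry_propagates[OF lower p_pos bound liminf]
    by blast
qed

end
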